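(* For $n\ge2$ let $\sigma_1,\sigma_2,\dots$ be independent exponential random variables, $\sigma_i$ having rate $17\,i\sqrt{\log n}$. Then for all $\alpha<1$, all $\beta<\alpha$ and any $c_3>0$, for all $n$ large enough, $$\mathbf P\Big(\sum_{i=1}^{n^\alpha}\sigma_i<1\Big)\le e^{-c_3n^\beta}.$$
   Context: The upper summation limit $n^\alpha$ is understood as $\lfloor n^\alpha\rfloor$; $\alpha$ is positive. *)

theory Defs
  imports "HOL-Probability.Probability"
begin

end

theory Submission
  imports Defs "HOL-Real_Asymp.Real_Asymp"
begin

text \<open>
  By the Chernoff bound with parameter \<open>t > 0\<close>, independent exponential variables with rates
  \<open>\<lambda>\<^sub>i\<close> satisfy \<open>P(\<Sum>\<sigma>\<^sub>i \<le> 1) \<le> exp t * \<Prod> \<lambda>\<^sub>i / (\<lambda>\<^sub>i + t)\<close>. For the rates \<open>\<lambda>\<^sub>i = a i\<close>,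
  \<open>i = 1..m\<close>, and \<open>t = a k\<close> the product is \<open>1 / ((m + k) choose k) \<le> (k / (m + k)) ^ k\<close>, so
  the probability is at most \<open>exp (- k)\<close> once \<open>m \<ge> k exp (a + 1)\<close>. With \<open>a = 17 sqrt (ln n)\<close>,
  \<open>m = \<lfloor>n powr \<alpha>\<rfloor>\<close> and \<open>k = \<lceil>n powr \<mu>\<rceil>\<close> for some \<open>\<beta> < \<mu> < \<alpha>\<close> this holds for large \<open>n\<close>,
  because \<open>exp (17 sqrt (ln n))\<close> grows slower than any power of \<open>n\<close>.
\<close>

lemma nn_integral_exp_neg_exponential:
  assumes distr: "distributed M lborel X (exponential_density l)" and "0 < l" "0 \<le> t"
  shows "(\<integral>\<^sup>+\<omega>. ennreal (exp (- t * X \<omega>)) \<partial>M) = ennreal (l / (l + t))"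
proof -
  have density: "ennreal (exponential_density l x) * ennreal (exp (- t * x)) =
      ennreal (l / (l + t)) * ennreal (exponential_density (l + t) x)" for x
    using assms(2,3)
    by (simp add: exponential_density_def ennreal_mult[symmetric] field_simps mult_exp_exp)
  have "(\<integral>\<^sup>+\<omega>. ennreal (exp (- t * X \<omega>)) \<partial>M)
      = (\<integral>\<^sup>+x. ennreal (exponential_density l x) * ennreal (exp (- t * x)) \<partial>lborel)"
    using distributed_nn_integral[OF distr, of "\<lambda>x. ennreal (exp (- t * x))"] by simp
  also have "\<dots> = ennreal (l / (l + t)) * (\<integral>\<^sup>+x. ennreal (exponential_density (l + t) x) \<partial>lborel)"
    unfolding density by (rule nn_integral_cmult) simp
  also have "(\<integral>\<^sup>+x. ennreal (exponential_density (l + t) x) \<partial>lborel) = 1"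
    using nn_integral_erlang_ith_moment[of "l + t" 0 0] assms(2,3) by simp
  finally show ?thesis by simp
qed

lemma (in prob_space) prob_sum_exponential_le_chernoff:
  assumes indep: "indep_vars (\<lambda>_. borel) X I" and "finite I"
    and distr: "\<And>i. i \<in> I \<Longrightarrow> distributed M lborel (X i) (exponential_density (l i))"
    and rates: "\<And>i. i \<in> I \<Longrightarrow> 0 < l i" and "0 < t"
  shows "prob {x \<in> space M. (\<Sum>i\<in>I. X i x) \<le> r} \<le> exp (t * r) * (\<Prod>i\<in>I. l i / (l i + t))"
proof -
  have [measurable]: "X i \<in> borel_measurable M" if "i \<in> I" for i
    using distributed_measurable[OF distr[OF that]] by simp
  have factors_nonneg: "0 \<le> l i / (l i + t)" if "i \<in> I" for i
    using rates[OF that] \<open>0 < t\<close> by simp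
  have "emeasure M {x \<in> space M. (\<Sum>i\<in>I. X i x) \<le> r}
      \<le> ennreal (exp (t * r)) * (\<integral>\<^sup>+x. ennreal (exp (- t * (\<Sum>i\<in>I. X i x))) * indicator (space M) x \<partial>M)"
    using \<open>0 < t\<close> by (intro Chernoff_ineq_nn_integral_le) auto
  also have "(\<integral>\<^sup>+x. ennreal (exp (- t * (\<Sum>i\<in>I. X i x))) * indicator (space M) x \<partial>M)
      = (\<integral>\<^sup>+x. (\<Prod>i\<in>I. ennreal (exp (- t * X i x))) \<partial>M)"
    by (intro nn_integral_cong)
      (simp add: sum_distrib_left exp_sum[OF \<open>finite I\<close>, symmetric] prod_ennreal)
  also have "\<dots> = (\<Prod>i\<in>I. \<integral>\<^sup>+x. ennreal (exp (- t * X i x)) \<partial>M)"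
    by (intro indep_vars_nn_integral indep_vars_compose2[OF indep] \<open>finite I\<close>) auto
  also have "\<dots> = (\<Prod>i\<in>I. ennreal (l i / (l i + t)))"
    using \<open>0 < t\<close> by (intro prod.cong refl nn_integral_exp_neg_exponential[OF distr rates]) auto
  also have "\<dots> = ennreal (\<Prod>i\<in>I. l i / (l i + t))"
    by (rule prod_ennreal[OF factors_nonneg])
  finally show ?thesis
    by (simp add: emeasure_eq_measure ennreal_mult[symmetric] prod_nonneg factors_nonneg)
qed

lemma prod_div_add_eq_fact:
  "(\<Prod>i=1..m. real i / (real i + real k)) = fact m * fact k / fact (m + k)"
proof (induction m)
  case (Suc m)
  then show ?case
    by (simp add: prod.cl_ivl_Suc field_simps del: of_nat_Suc) (simp add: algebra_simps)
qed simp

lemma prod_div_add_le_pow: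
  "(\<Prod>i=1..m. real i / (real i + real k)) \<le> (real k / real (m + k)) ^ k"
proof -
  have "(real (m + k) / real k) ^ k \<le> real ((m + k) choose k)"
    by (rule binomial_ge_n_over_k_pow_k) simp
  then have "1 / real ((m + k) choose k) \<le> 1 / (real (m + k) / real k) ^ k"
    by (cases "k = 0") (auto intro!: divide_left_mono)
  moreover have "(\<Prod>i=1..m. real i / (real i + real k)) = 1 / real ((m + k) choose k)"
    unfolding prod_div_add_eq_fact using binomial_fact[of k "m + k", where 'a = real]
    by (simp add: mult.commute)
  ultimately show ?thesis by (simp add: power_divide)
qed

lemma (in prob_space) prob_sum_linear_rate_exponential_le_1:
  assumes indep: "indep_vars (\<lambda>_. borel) X {1..m}"
    and distr: "\<And>i. i \<in> {1..m} \<Longrightarrow> distributed M lborel (X i) (exponential_density (a * real i))"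
    and "0 < a" "0 < k" and many: "real k * exp (a + 1) \<le> real m"
  shows "prob {x \<in> space M. (\<Sum>i=1..m. X i x) \<le> 1} \<le> exp (- real k)"
proof -
  have ratio: "real k / real (m + k) \<le> exp (- (a + 1))"
  proof -
    have "real k = real k * exp (a + 1) * exp (- (a + 1))"
      by (simp add: mult_exp_exp)
    also have "\<dots> \<le> real (m + k) * exp (- (a + 1))"
      using many by (intro mult_right_mono) auto
    finally have "real k \<le> real (m + k) * exp (- (a + 1))" .
    then show ?thesis using \<open>0 < k\<close> by (simp add: divide_le_eq mult.commute)
  qed
  have "prob {x \<in> space M. (\<Sum>i=1..m. X i x) \<le> 1}
      \<le> exp (a * k) * (\<Prod>i=1..m. a * i / (a * i + a * k))"
    using prob_sum_exponential_le_chernoff[OF indep _ distr, of "a * k" 1] \<open>0 < a\<close> \<open>0 < k\<close> by simp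
  also have "(\<Prod>i=1..m. a * i / (a * i + a * k)) = (\<Prod>i=1..m. real i / (real i + real k))"
    using \<open>0 < a\<close> by (intro prod.cong refl) (simp add: distrib_left[symmetric])
  also have "exp (a * k) * \<dots> \<le> exp (a * k) * (real k / real (m + k)) ^ k"
    by (intro mult_left_mono prod_div_add_le_pow) simp
  also have "\<dots> \<le> exp (a * k) * exp (- (a + 1)) ^ k"
    using ratio by (intro mult_left_mono power_mono) auto
  also have "\<dots> = exp (- real k)"
    by (simp add: exp_of_nat_mult[symmetric] mult_exp_exp algebra_simps)
  finally show ?thesis .
qed

lemma (in prob_space) prob_sum_linear_rate_exponential_less_1:
  assumes indep: "indep_vars (\<lambda>_. borel) X {1..}"
    and distr: "\<And>i. 1 \<le> i \<Longrightarrow> distributed M lborel (X i) (exponential_density (a * real i))"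
    and "0 < a" "0 < y" and many: "(y + 1) * exp (a + 1) \<le> z - 1"
  shows "prob {x \<in> space M. (\<Sum>i=1..nat \<lfloor>z\<rfloor>. X i x) < 1} \<le> exp (- y)"
proof -
  define m where "m = nat \<lfloor>z\<rfloor>"
  define k where "k = nat \<lceil>y\<rceil>"
  have "0 < k" using \<open>0 < y\<close> by (simp add: k_def)
  have k_eq: "real k = of_int \<lceil>y\<rceil>" using \<open>0 < y\<close> by (simp add: k_def)
  then have "real k * exp (a + 1) \<le> (y + 1) * exp (a + 1)"
    by (intro mult_right_mono) (linarith, simp)
  also have "\<dots> \<le> real m" using many by (simp add: m_def) linarith
  finally have "real k * exp (a + 1) \<le> real m" .
  moreover have "indep_vars (\<lambda>_. borel) X {1..m}"
    using indep_vars_subset[OF indep] by auto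
  moreover have [measurable]: "X i \<in> borel_measurable M" if "1 \<le> i" for i
    using distributed_measurable[OF distr[OF that]] by simp
  ultimately have "prob {x \<in> space M. (\<Sum>i=1..m. X i x) \<le> 1} \<le> exp (- real k)"
    using distr \<open>0 < a\<close> \<open>0 < k\<close> by (intro prob_sum_linear_rate_exponential_le_1) auto
  then have "prob {x \<in> space M. (\<Sum>i=1..m. X i x) < 1} \<le> exp (- real k)"
    by (rule order_trans[rotated]) (intro finite_measure_mono; auto)
  also have "\<dots> \<le> exp (- y)"
    using k_eq by simp
  finally show ?thesis unfolding m_def .
qed

theorem mainTheorem8:
  fixes M :: "'a measure" and \<sigma> :: "nat \<Rightarrow> nat \<Rightarrow> 'a \<Rightarrow> real"
  assumes "prob_space M"
    and "\<And>n. n \<ge> 2 \<Longrightarrow> prob_space.indep_vars M (\<lambda>_. borel) (\<sigma> n) {1..}"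
    and "\<And>n i. n \<ge> 2 \<Longrightarrow> i \<ge> 1 \<Longrightarrow>
           distributed M lborel (\<sigma> n i) (exponential_density (17 * real i * sqrt (ln (real n))))"
  shows "\<forall>\<alpha> \<beta> c\<^sub>3. 0 < \<alpha> \<longrightarrow> \<alpha> < 1 \<longrightarrow> \<beta> < \<alpha> \<longrightarrow> 0 < c\<^sub>3 \<longrightarrow>
           (\<forall>\<^sub>F n in sequentially.
              measure M {x \<in> space M. (\<Sum>i=1..nat \<lfloor>real n powr \<alpha>\<rfloor>. \<sigma> n i x) < 1}
                \<le> exp (- c\<^sub>3 * real n powr \<beta>))"
proof (intro allI impI)
  fix \<alpha> \<beta> c :: real
  assume "0 < \<alpha>" "\<alpha> < 1" "\<beta> < \<alpha>" "0 < c"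
  interpret prob_space M by fact
  define \<mu> where "\<mu> = (\<alpha> + max \<beta> 0) / 2"
  have "0 < \<mu>" "\<mu> < \<alpha>" "\<beta> < \<mu>"
    using \<open>0 < \<alpha>\<close> \<open>\<beta> < \<alpha>\<close> by (auto simp: \<mu>_def)
  have "\<forall>\<^sub>F n in sequentially. 2 \<le> n
      \<and> (real n powr \<mu> + 1) * exp (17 * sqrt (ln (real n)) + 1) \<le> real n powr \<alpha> - 1
      \<and> c * real n powr \<beta> \<le> real n powr \<mu>"
    using \<open>0 < \<mu>\<close> \<open>\<mu> < \<alpha>\<close> \<open>\<beta> < \<mu>\<close> \<open>0 < c\<close>
    by (intro eventually_conj eventually_ge_at_top) real_asymp+
  then show "\<forall>\<^sub>F n in sequentially.
      measure M {x \<in> space M. (\<Sum>i=1..nat \<lfloor>real n powr \<alpha>\<rfloor>. \<sigma> n i x) < 1}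
        \<le> exp (- c * real n powr \<beta>)"
  proof eventually_elim
    case (elim n)
    have "distributed M lborel (\<sigma> n i) (exponential_density (17 * sqrt (ln (real n)) * real i))"
      if "1 \<le> i" for i
      using assms(3)[of n i] elim that by (simp add: mult_ac)
    then have "measure M {x \<in> space M. (\<Sum>i=1..nat \<lfloor>real n powr \<alpha>\<rfloor>. \<sigma> n i x) < 1}
        \<le> exp (- (real n powr \<mu>))"
      using elim assms(2)[of n] by (intro prob_sum_linear_rate_exponential_less_1) auto
    also have "\<dots> \<le> exp (- c * real n powr \<beta>)"
      using elim by simp
    finally show ?case .
  qed
qed

end
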